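(* For every computable structure $\mathcal{S}$, the set $CatSpec_{\approx}(\mathcal{S})$ either consists of all Turing degrees or is meager (i.e., the set of all reals $X\subseteq\omega$ whose Turing degree lies in $CatSpec_{\approx}(\mathcal{S})$ is meager in Cantor space $2^{\omega}$).
   Context: Two structures are bi-embeddable ($\approx$) if each embeds isomorphically into the other. A computable structure $\mathcal{S}$ is $\mathbf{d}$-computably bi-embeddably categorical if for every computable $\mathcal{A}\approx\mathcal{S}$ there are $\mathbf{d}$-computable embeddings $\mathcal{A}\hookrightarrow\mathcal{S}$ and $\mathcal{S}\hookrightarrow\mathcal{A}$. $CatSpec_{\approx}(\mathcal{S})$ is the set of all Turing degrees $\mathbf{d}$ for which $\mathcal{S}$ is $\mathbf{d}$-computably bi-embeddably categorical. *)

theory Defs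
  imports Main "HOL-Library.Nat_Bijection"
begin

datatype rf = Zero | Succ | Proj nat | Comp rf "rf list" | Prec rf rf | Mu rf | Oracle

fun hd0 :: "nat list \<Rightarrow> nat" where
  "hd0 [] = 0" | "hd0 (x # _) = x"

inductive eval :: "nat set \<Rightarrow> rf \<Rightarrow> nat list \<Rightarrow> nat \<Rightarrow> bool" for X :: "nat set" where
  ev_zero: "eval X Zero xs 0"
| ev_succ: "eval X Succ xs (Suc (hd0 xs))"
| ev_proj: "eval X (Proj i) xs (if i < length xs then xs ! i else 0)"
| ev_oracle: "eval X Oracle xs (if hd0 xs \<in> X then 1 else 0)"
| ev_comp: "list_all2 (\<lambda>g y. eval X g xs y) gs ys \<Longrightarrow> eval X f ys z \<Longrightarrow> eval X (Comp f gs) xs z"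
| ev_prec0: "eval X f xs y \<Longrightarrow> eval X (Prec f g) (0 # xs) y"
| ev_precS: "eval X (Prec f g) (n # xs) y \<Longrightarrow> eval X g (n # y # xs) z
              \<Longrightarrow> eval X (Prec f g) (Suc n # xs) z"
| ev_mu: "eval X f (n # xs) 0 \<Longrightarrow> (\<forall>m<n. \<exists>y. eval X f (m # xs) (Suc y))
              \<Longrightarrow> eval X (Mu f) xs n"

definition computable_in :: "nat set \<Rightarrow> (nat \<Rightarrow> nat) \<Rightarrow> bool" where
  "computable_in X f \<longleftrightarrow> (\<exists>p. \<forall>n. eval X p [n] (f n))"

definition computable :: "(nat \<Rightarrow> nat) \<Rightarrow> bool" where
  "computable f \<longleftrightarrow> computable_in {} f"

definition chi :: "nat set \<Rightarrow> nat \<Rightarrow> nat" where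
  "chi A n = (if n \<in> A then 1 else 0)"

definition turing_le :: "nat set \<Rightarrow> nat set \<Rightarrow> bool" where
  "turing_le A B \<longleftrightarrow> computable_in B (chi A)"

definition turing_equiv_rel :: "(nat set \<times> nat set) set" where
  "turing_equiv_rel = {(A, B). turing_le A B \<and> turing_le B A}"

definition turing_degrees :: "nat set set set" where
  "turing_degrees = UNIV // turing_equiv_rel"

text \<open>A function is d-computable if it is computable from some (equivalently every) member of d.\<close>
definition deg_computable :: "nat set set \<Rightarrow> (nat \<Rightarrow> nat) \<Rightarrow> bool" where
  "deg_computable d f \<longleftrightarrow> (\<exists>X\<in>d. computable_in X f)"

text \<open>A countable language: relation symbols and function symbols (constants = arity 0)
  indexed by naturals; None means the symbol is not in the language.\<close>
record lang =
  rel_ar :: "nat \<Rightarrow> nat option"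
  fun_ar :: "nat \<Rightarrow> nat option"

record struc =
  sdom :: "nat set"
  srel :: "nat \<Rightarrow> nat list \<Rightarrow> bool"
  sfun :: "nat \<Rightarrow> nat list \<Rightarrow> nat"

definition enc_opt :: "nat option \<Rightarrow> nat" where
  "enc_opt o' = (case o' of None \<Rightarrow> 0 | Some k \<Rightarrow> Suc k)"

definition computable_lang :: "lang \<Rightarrow> bool" where
  "computable_lang L \<longleftrightarrow> computable (\<lambda>i. enc_opt (rel_ar L i)) \<and> computable (\<lambda>i. enc_opt (fun_ar L i))"

definition is_struc :: "lang \<Rightarrow> struc \<Rightarrow> bool" where
  "is_struc L A \<longleftrightarrow> sdom A \<noteq> {} \<and>
     (\<forall>j k xs. fun_ar L j = Some k \<and> length xs = k \<and> set xs \<subseteq> sdom A \<longrightarrow> sfun A j xs \<in> sdom A)"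

definition computable_struc :: "lang \<Rightarrow> struc \<Rightarrow> bool" where
  "computable_struc L A \<longleftrightarrow> is_struc L A \<and> computable (chi (sdom A)) \<and>
     (\<exists>r. computable r \<and> (\<forall>i k xs. rel_ar L i = Some k \<and> length xs = k \<and> set xs \<subseteq> sdom A \<longrightarrow>
          r (prod_encode (i, list_encode xs)) = (if srel A i xs then 1 else 0))) \<and>
     (\<exists>f. computable f \<and> (\<forall>j k xs. fun_ar L j = Some k \<and> length xs = k \<and> set xs \<subseteq> sdom A \<longrightarrow>
          f (prod_encode (j, list_encode xs)) = sfun A j xs))"

definition embedding :: "lang \<Rightarrow> struc \<Rightarrow> struc \<Rightarrow> (nat \<Rightarrow> nat) \<Rightarrow> bool" where
  "embedding L A B h \<longleftrightarrow> h ` sdom A \<subseteq> sdom B \<and> inj_on h (sdom A) \<and>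
     (\<forall>i k xs. rel_ar L i = Some k \<and> length xs = k \<and> set xs \<subseteq> sdom A \<longrightarrow>
          (srel A i xs \<longleftrightarrow> srel B i (map h xs))) \<and>
     (\<forall>j k xs. fun_ar L j = Some k \<and> length xs = k \<and> set xs \<subseteq> sdom A \<longrightarrow>
          h (sfun A j xs) = sfun B j (map h xs))"

definition bi_embeddable :: "lang \<Rightarrow> struc \<Rightarrow> struc \<Rightarrow> bool" where
  "bi_embeddable L A B \<longleftrightarrow> (\<exists>h. embedding L A B h) \<and> (\<exists>g. embedding L B A g)"

definition catspec_be :: "lang \<Rightarrow> struc \<Rightarrow> nat set set set" where
  "catspec_be L S = {d \<in> turing_degrees. \<forall>A. computable_struc L A \<and> bi_embeddable L A S \<longrightarrow>
      (\<exists>h. deg_computable d h \<and> embedding L A S h) \<and> (\<exists>g. deg_computable d g \<and> embedding L S A g)}"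

definition cyl :: "bool list \<Rightarrow> nat set set" where
  "cyl \<sigma> = {X. \<forall>i<length \<sigma>. (i \<in> X) = \<sigma> ! i}"

definition nowhere_dense_cantor :: "nat set set \<Rightarrow> bool" where
  "nowhere_dense_cantor N \<longleftrightarrow> (\<forall>\<sigma>. \<exists>\<tau>. cyl (\<sigma> @ \<tau>) \<inter> N = {})"

definition meager_cantor :: "nat set set \<Rightarrow> bool" where
  "meager_cantor M \<longleftrightarrow> (\<exists>N :: nat \<Rightarrow> nat set set. (\<forall>n. nowhere_dense_cantor (N n)) \<and> M \<subseteq> (\<Union>n. N n))"

end

theory Submission
  imports Defs "HOL-Library.Countable"
begin

text \<open>For a program p and structures A, B let E(p) be the set of oracles X for which p relative
  to X computes an embedding of A into B. If some E(p) is dense in a basic open set [sigma], an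
  embedding can be computed without any oracle: starting from sigma, search effectively for ever
  longer finite conditions under which p converges on 0, 1, 2, ... in turn. Density makes every
  search succeed, and each finite stage is extended by some X in E(p), so the values found agree
  with a genuine embedding on every initial segment, which already makes them an embedding.
  Hence either every computable A bi-embeddable with S has computable embeddings in both
  directions, and then every degree lies in the spectrum; or for some such A all E(p) in one
  direction are nowhere dense, and every member of a degree in the spectrum lies in one of these
  countably many sets.\<close>

instance rf :: countable by countable_datatype

inductive_cases eval_ZeroE: "eval X Zero xs y"
inductive_cases eval_SuccE: "eval X Succ xs y"
inductive_cases eval_ProjE: "eval X (Proj i) xs y"
inductive_cases eval_OracleE: "eval X Oracle xs y"
inductive_cases eval_CompE: "eval X (Comp f gs) xs y"
inductive_cases eval_PrecE: "eval X (Prec f g) xs y"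
inductive_cases eval_MuE: "eval X (Mu f) xs y"

lemma list_all2_right_unique:
  assumes "list_all2 (\<lambda>a b. P a b \<and> (\<forall>b'. P a b' \<longrightarrow> b = b')) as bs" and "list_all2 P as bs'"
  shows "bs = bs'"
  using assms by (induction as bs arbitrary: bs' rule: list_all2_induct) (auto simp: list_all2_Cons1)

lemma eval_deterministic: "eval X p xs y \<Longrightarrow> eval X p xs y' \<Longrightarrow> y = y'"
proof (induction arbitrary: y' rule: eval.induct)
  case (ev_comp xs gs ys f z)
  from ev_comp.prems obtain ys' where "list_all2 (\<lambda>g y. eval X g xs y) gs ys'" "eval X f ys' y'"
    by (auto elim: eval_CompE)
  moreover from this(1) have "ys = ys'"
    by (rule list_all2_right_unique[OF ev_comp.IH(1)])
  ultimately show ?case using ev_comp.IH(2) by blast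
next
  case (ev_prec0 f xs y g)
  from ev_prec0.prems have "eval X f xs y'" by (auto elim: eval_PrecE)
  with ev_prec0.IH show ?case by blast
next
  case (ev_precS f g n xs y z)
  from ev_precS.prems obtain y2 where "eval X (Prec f g) (n # xs) y2" "eval X g (n # y2 # xs) y'"
    by (auto elim: eval_PrecE)
  with ev_precS.IH show ?case by auto
next
  case (ev_mu f n xs)
  from ev_mu.prems have y': "eval X f (y' # xs) 0" "\<forall>m<y'. \<exists>z. eval X f (m # xs) (Suc z)"
    by (auto elim: eval_MuE)
  show ?case
  proof (cases n y' rule: linorder_cases)
    case less
    with y'(2) obtain z where "eval X f (n # xs) (Suc z)" by blast
    with ev_mu.IH(1) have "0 = Suc z" by blast
    then show ?thesis by simp
  next
    case greater
    with ev_mu.IH(2) obtain z where "\<forall>w. eval X f (y' # xs) w \<longrightarrow> Suc z = w" by blast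
    with y'(1) have "Suc z = 0" by blast
    then show ?thesis by simp
  qed
qed (auto elim: eval_ZeroE eval_SuccE eval_ProjE eval_OracleE)

primrec subst_oracle :: "rf \<Rightarrow> rf \<Rightarrow> rf" where
  "subst_oracle q Zero = Zero"
| "subst_oracle q Succ = Succ"
| "subst_oracle q (Proj i) = Proj i"
| "subst_oracle q (Comp f gs) = Comp (subst_oracle q f) (map (subst_oracle q) gs)"
| "subst_oracle q (Prec f g) = Prec (subst_oracle q f) (subst_oracle q g)"
| "subst_oracle q (Mu f) = Mu (subst_oracle q f)"
| "subst_oracle q Oracle = Comp q [Proj 0]"

lemma eval_subst_oracle:
  assumes "eval Y p xs y" and q: "\<forall>n. eval X q [n] (chi Y n)"
  shows "eval X (subst_oracle q p) xs y"
  using assms(1)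
proof (induction rule: eval.induct)
  case (ev_oracle xs)
  have "eval X (Proj 0) xs (hd0 xs)"
    using eval.ev_proj[of X 0 xs] by (cases xs) auto
  moreover have "eval X q [hd0 xs] (if hd0 xs \<in> Y then 1 else 0)"
    using q unfolding chi_def by metis
  ultimately show ?case by (auto intro: eval.ev_comp)
next
  case ev_proj
  then show ?case by (simp add: eval.ev_proj)
next
  case (ev_comp xs gs ys f z)
  have "list_all2 (\<lambda>g y. eval X g xs y) (map (subst_oracle q) gs) ys"
    using ev_comp.IH(1) by (auto simp: list.rel_map elim: list_all2_mono)
  with ev_comp.IH(2) show ?case by (auto intro: eval.ev_comp)
next
  case ev_prec0
  then show ?case by (auto intro: eval.ev_prec0)
next
  case ev_precS
  then show ?case by (auto intro: eval.ev_precS)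
next
  case ev_mu
  then show ?case by (auto intro: eval.ev_mu)
qed (auto intro: eval.ev_zero eval.ev_succ)

lemma computable_in_turing_le: "computable_in Y h \<Longrightarrow> turing_le Y X \<Longrightarrow> computable_in X h"
  unfolding computable_in_def turing_le_def using eval_subst_oracle by metis

lemma turing_le_refl: "turing_le A A"
  unfolding turing_le_def computable_in_def chi_def
  by (rule exI[of _ Oracle]) (use eval.ev_oracle[of A "[_]"] in simp)

lemma turing_le_trans: "turing_le A B \<Longrightarrow> turing_le B C \<Longrightarrow> turing_le A C"
  unfolding turing_le_def using computable_in_turing_le turing_le_def by blast

lemma empty_turing_le: "turing_le {} X"
  unfolding turing_le_def computable_in_def chi_def using eval.ev_zero by fastforce

lemma computable_imp_computable_in: "computable h \<Longrightarrow> computable_in X h"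
  unfolding computable_def using computable_in_turing_le empty_turing_le by blast

definition recursive :: "nat \<Rightarrow> (nat list \<Rightarrow> nat) \<Rightarrow> bool" where
  "recursive k f \<longleftrightarrow> (\<exists>q. \<forall>xs. length xs = k \<longrightarrow> eval {} q xs (f xs))"

lemma recursive_cong: "recursive k f \<Longrightarrow> (\<And>xs. length xs = k \<Longrightarrow> f xs = g xs) \<Longrightarrow> recursive k g"
  unfolding recursive_def by metis

lemma recursive_zero: "recursive k (\<lambda>_. 0)"
  unfolding recursive_def using eval.ev_zero by blast

lemma recursive_proj: "i < k \<Longrightarrow> recursive k (\<lambda>xs. xs ! i)"
  unfolding recursive_def using eval.ev_proj by (metis (full_types))

lemma recursive_comp:
  assumes f: "recursive m f" and len: "length gl = m" and gs: "\<forall>g\<in>set gl. recursive k g"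
  shows "recursive k (\<lambda>xs. f (map (\<lambda>g. g xs) gl))"
proof -
  obtain qf where qf: "\<forall>xs. length xs = m \<longrightarrow> eval {} qf xs (f xs)"
    using f recursive_def by blast
  from gs obtain Q where Q: "\<forall>g\<in>set gl. \<forall>xs. length xs = k \<longrightarrow> eval {} (Q g) xs (g xs)"
    unfolding recursive_def by metis
  have "eval {} (Comp qf (map Q gl)) xs (f (map (\<lambda>g. g xs) gl))" if "length xs = k" for xs
  proof (rule eval.ev_comp)
    show "list_all2 (\<lambda>g y. eval {} g xs y) (map Q gl) (map (\<lambda>g. g xs) gl)"
      using Q that by (auto simp: list.rel_map intro!: list.rel_refl_strong)
    show "eval {} qf (map (\<lambda>g. g xs) gl) (f (map (\<lambda>g. g xs) gl))"
      using qf len by auto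
  qed
  then show ?thesis unfolding recursive_def by blast
qed

fun prim_rec :: "(nat list \<Rightarrow> nat) \<Rightarrow> (nat list \<Rightarrow> nat) \<Rightarrow> nat \<Rightarrow> nat list \<Rightarrow> nat" where
  "prim_rec F G 0 ys = F ys"
| "prim_rec F G (Suc n) ys = G (n # prim_rec F G n ys # ys)"

lemma recursive_prim_rec:
  assumes "recursive k F" "recursive (Suc (Suc k)) G"
  shows "recursive (Suc k) (\<lambda>xs. prim_rec F G (hd xs) (tl xs))"
proof -
  obtain qf where qf: "\<forall>xs. length xs = k \<longrightarrow> eval {} qf xs (F xs)"
    using assms recursive_def by blast
  obtain qg where qg: "\<forall>xs. length xs = Suc (Suc k) \<longrightarrow> eval {} qg xs (G xs)"
    using assms recursive_def by blast
  have "eval {} (Prec qf qg) (n # ys) (prim_rec F G n ys)" if "length ys = k" for n ys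
  proof (induction n)
    case 0
    then show ?case using qf that by (auto intro: eval.ev_prec0)
  next
    case (Suc n)
    then show ?case using qg that by (auto intro: eval.ev_precS)
  qed
  then have "\<forall>xs. length xs = Suc k \<longrightarrow> eval {} (Prec qf qg) xs (prim_rec F G (hd xs) (tl xs))"
    by (metis Suc_length_conv list.sel(1,3))
  then show ?thesis unfolding recursive_def by blast
qed

lemma recursive_Least:
  assumes "recursive (Suc k) g" and "\<forall>xs. length xs = k \<longrightarrow> (\<exists>m. g (m # xs) = 0)"
  shows "recursive k (\<lambda>xs. LEAST m. g (m # xs) = 0)"
proof -
  obtain q where q: "\<forall>xs. length xs = Suc k \<longrightarrow> eval {} q xs (g xs)"
    using assms recursive_def by blast
  have "eval {} (Mu q) xs (LEAST m. g (m # xs) = 0)" if len: "length xs = k" for xs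
  proof (rule eval.ev_mu)
    obtain m0 where "g (m0 # xs) = 0" using assms(2) len by blast
    then have "g ((LEAST m. g (m # xs) = 0) # xs) = 0" by (rule LeastI)
    then show "eval {} q ((LEAST m. g (m # xs) = 0) # xs) 0"
      using q len by (metis length_Cons)
    show "\<forall>m<(LEAST m. g (m # xs) = 0). \<exists>y. eval {} q (m # xs) (Suc y)"
    proof (intro allI impI)
      fix m assume "m < (LEAST m. g (m # xs) = 0)"
      then have "g (m # xs) = Suc (g (m # xs) - 1)" using not_less_Least by fastforce
      then show "\<exists>y. eval {} q (m # xs) (Suc y)" using q len by (metis length_Cons)
    qed
  qed
  then show ?thesis unfolding recursive_def by blast
qed

lemma recursive_comp1: "recursive 1 f \<Longrightarrow> recursive k g \<Longrightarrow> recursive k (\<lambda>xs. f [g xs])"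
  using recursive_comp[of 1 f "[g]" k] by simp

lemma recursive_comp2:
  "recursive 2 f \<Longrightarrow> recursive k g \<Longrightarrow> recursive k h \<Longrightarrow> recursive k (\<lambda>xs. f [g xs, h xs])"
  using recursive_comp[of 2 f "[g, h]" k] by simp

lemma recursive_comp3: "recursive 3 f \<Longrightarrow> recursive k g \<Longrightarrow> recursive k h \<Longrightarrow> recursive k l \<Longrightarrow>
    recursive k (\<lambda>xs. f [g xs, h xs, l xs])"
  using recursive_comp[of 3 f "[g, h, l]" k] by simp

lemma recursive_Suc: "recursive k f \<Longrightarrow> recursive k (\<lambda>xs. Suc (f xs))"
proof -
  have "recursive 1 (\<lambda>xs. Suc (xs ! 0))"
    unfolding recursive_def
  proof (intro exI allI impI)
    fix xs :: "nat list" assume "length xs = 1"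
    then show "eval {} Succ xs (Suc (xs ! 0))"
      using eval.ev_succ[of "{}" xs] by (cases xs) auto
  qed
  then show "recursive k f \<Longrightarrow> recursive k (\<lambda>xs. Suc (f xs))"
    using recursive_comp1[of "\<lambda>xs. Suc (xs ! 0)" k f] by simp
qed

lemma recursive_const: "recursive k (\<lambda>_. c)"
  by (induction c) (auto intro: recursive_zero recursive_Suc)

lemma recursive_if_zero:
  assumes "recursive k t" "recursive k a" "recursive k b"
  shows "recursive k (\<lambda>xs. if t xs = 0 then a xs else b xs)"
proof -
  have "recursive (Suc 2) (\<lambda>xs. prim_rec (\<lambda>ys. ys ! 0) (\<lambda>ys. ys ! 3) (hd xs) (tl xs))"
    by (rule recursive_prim_rec) (auto intro: recursive_proj)
  then have "recursive 3 (\<lambda>xs. prim_rec (\<lambda>ys. ys ! 0) (\<lambda>ys. ys ! 3) (hd xs) (tl xs))"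
    by simp
  then have "recursive 3 (\<lambda>xs. if xs ! 0 = 0 then xs ! 1 else xs ! 2)"
  proof (rule recursive_cong)
    fix xs :: "nat list" assume "length xs = 3"
    then obtain a b c where "xs = [a, b, c]" by (auto simp: numeral_eq_Suc length_Suc_conv)
    then show "prim_rec (\<lambda>ys. ys ! 0) (\<lambda>ys. ys ! 3) (hd xs) (tl xs) = (if xs ! 0 = 0 then xs ! 1 else xs ! 2)"
      by (cases a) auto
  qed
  from recursive_comp3[OF this assms] show ?thesis by (rule recursive_cong) simp
qed

lemma recursive_pred: "recursive k a \<Longrightarrow> recursive k (\<lambda>xs. a xs - 1)"
proof -
  have "recursive 1 (\<lambda>xs. prim_rec (\<lambda>ys. 0) (\<lambda>ys. ys ! 0) (hd xs) (tl xs))"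
    using recursive_prim_rec[of 0 "\<lambda>ys. 0" "\<lambda>ys. ys ! 0"] by (simp add: recursive_zero recursive_proj)
  then have "recursive 1 (\<lambda>xs. xs ! 0 - 1)"
  proof (rule recursive_cong)
    fix xs :: "nat list" assume "length xs = 1"
    then obtain a where "xs = [a]" by (auto simp: length_Suc_conv)
    then show "prim_rec (\<lambda>ys. 0) (\<lambda>ys. ys ! 0) (hd xs) (tl xs) = xs ! 0 - 1" by (cases a) auto
  qed
  then show "recursive k a \<Longrightarrow> recursive k (\<lambda>xs. a xs - 1)"
    using recursive_comp1[of "\<lambda>xs. xs ! 0 - 1"] by simp
qed

lemma recursive_diff: "recursive k a \<Longrightarrow> recursive k b \<Longrightarrow> recursive k (\<lambda>xs. a xs - b xs)"
proof -
  have "recursive (Suc 1) (\<lambda>xs. prim_rec (\<lambda>ys. ys ! 0) (\<lambda>ys. ys ! 1 - 1) (hd xs) (tl xs))"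
    by (rule recursive_prim_rec) (rule recursive_proj, simp, rule recursive_pred, rule recursive_proj, simp)
  then have "recursive 2 (\<lambda>xs. prim_rec (\<lambda>ys. ys ! 0) (\<lambda>ys. ys ! 1 - 1) (hd xs) (tl xs))"
    by (simp add: numeral_2_eq_2)
  then have "recursive 2 (\<lambda>xs. xs ! 1 - xs ! 0)"
  proof (rule recursive_cong)
    fix xs :: "nat list" assume "length xs = 2"
    then obtain a b where xs: "xs = [a, b]" by (auto simp: numeral_eq_Suc length_Suc_conv)
    have "prim_rec (\<lambda>ys. ys ! 0) (\<lambda>ys. ys ! 1 - 1) a [b] = b - a" by (induction a) auto
    then show "prim_rec (\<lambda>ys. ys ! 0) (\<lambda>ys. ys ! 1 - 1) (hd xs) (tl xs) = xs ! 1 - xs ! 0"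
      using xs by simp
  qed
  then show "recursive k a \<Longrightarrow> recursive k b \<Longrightarrow> recursive k (\<lambda>xs. a xs - b xs)"
    using recursive_comp2[of "\<lambda>xs. xs ! 1 - xs ! 0" k b a] by simp
qed

lemma recursive_if_eq:
  assumes "recursive k a" "recursive k b" "recursive k c" "recursive k d"
  shows "recursive k (\<lambda>xs. if a xs = b xs then c xs else d xs)"
proof -
  have "recursive k (\<lambda>xs. if a xs - b xs = 0 then (if b xs - a xs = 0 then c xs else d xs) else d xs)"
    using assms by (intro recursive_if_zero recursive_diff)
  then show ?thesis by (rule recursive_cong) auto
qed

lemma recursive_if_zero_mem:
  "(\<forall>g\<in>set gl. recursive k g) \<Longrightarrow> recursive k r \<Longrightarrow>
    recursive k (\<lambda>xs. if 0 \<in> set (map (\<lambda>g. g xs) gl) then 0 else r xs)"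
proof (induction gl)
  case (Cons g gl)
  then have "recursive k (\<lambda>xs. if g xs = 0 then 0 else if 0 \<in> set (map (\<lambda>g. g xs) gl) then 0 else r xs)"
    by (intro recursive_if_zero) (auto intro: recursive_zero)
  then show ?case by (rule recursive_cong) auto
qed simp

lemma recursive_mod3: "recursive k a \<Longrightarrow> recursive k (\<lambda>xs. a xs mod 3)"
proof -
  let ?G = "\<lambda>ys. if ys ! 1 = 2 then 0 else Suc (ys ! 1)"
  have "recursive (Suc 0) (\<lambda>xs. prim_rec (\<lambda>_. 0) ?G (hd xs) (tl xs))"
    by (rule recursive_prim_rec) (auto intro!: recursive_if_eq recursive_proj recursive_const recursive_Suc)
  then have "recursive (Suc 0) (\<lambda>xs. xs ! 0 mod 3)"
  proof (rule recursive_cong)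
    fix xs :: "nat list" assume "length xs = Suc 0"
    then obtain n where xs: "xs = [n]" by (auto simp: length_Suc_conv)
    have "prim_rec (\<lambda>_. 0) ?G n [] = n mod 3" by (induction n) (auto simp: mod_Suc)
    then show "prim_rec (\<lambda>_. 0) ?G (hd xs) (tl xs) = xs ! 0 mod 3" using xs by simp
  qed
  then show "recursive k a \<Longrightarrow> recursive k (\<lambda>xs. a xs mod 3)"
    using recursive_comp1[of "\<lambda>xs. xs ! 0 mod 3" k a] by simp
qed

lemma recursive_div3: "recursive k a \<Longrightarrow> recursive k (\<lambda>xs. a xs div 3)"
proof -
  let ?G = "\<lambda>ys. if ys ! 0 mod 3 = 2 then Suc (ys ! 1) else ys ! 1"
  have "recursive (Suc 0) (\<lambda>xs. prim_rec (\<lambda>_. 0) ?G (hd xs) (tl xs))"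
    by (rule recursive_prim_rec)
      (auto intro!: recursive_if_eq recursive_proj recursive_const recursive_Suc recursive_mod3)
  then have "recursive (Suc 0) (\<lambda>xs. xs ! 0 div 3)"
  proof (rule recursive_cong)
    fix xs :: "nat list" assume "length xs = Suc 0"
    then obtain n where xs: "xs = [n]" by (auto simp: length_Suc_conv)
    have "prim_rec (\<lambda>_. 0) ?G n [] = n div 3" by (induction n) (auto simp: div_Suc mod_Suc)
    then show "prim_rec (\<lambda>_. 0) ?G (hd xs) (tl xs) = xs ! 0 div 3" using xs by simp
  qed
  then show "recursive k a \<Longrightarrow> recursive k (\<lambda>xs. a xs div 3)"
    using recursive_comp1[of "\<lambda>xs. xs ! 0 div 3" k a] by simp
qed

lemma recursive_hd0_drop2: "recursive (Suc (Suc k)) (\<lambda>xs. hd0 (drop 2 xs))"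
proof (cases k)
  case 0
  show ?thesis by (rule recursive_cong[OF recursive_zero]) (simp add: 0)
next
  case (Suc k')
  show ?thesis
  proof (rule recursive_cong[OF recursive_proj[of 2]])
    fix xs :: "nat list" assume "length xs = Suc (Suc k)"
    then obtain a b c ys where "xs = a # b # c # ys" using Suc by (auto simp: length_Suc_conv)
    then show "xs ! 2 = hd0 (drop 2 xs)" by (simp add: numeral_2_eq_2)
  qed (use Suc in simp)
qed

section \<open>Finite oracle conditions\<close>

text \<open>A number c codes a finite condition on oracles through its ternary digits: digit i of c
  is 0 if the condition says nothing about i, 1 if it demands i \<notin> X and 2 if it demands i \<in> X.\<close>

definition trit :: "nat \<Rightarrow> nat \<Rightarrow> nat" where
  "trit c i = c div 3 ^ i mod 3"

definition agrees :: "nat set \<Rightarrow> nat \<Rightarrow> bool" where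
  "agrees X c \<longleftrightarrow> (\<forall>i. trit c i \<noteq> 0 \<longrightarrow> (i \<in> X \<longleftrightarrow> trit c i = 2))"

definition prefix_code :: "nat set \<Rightarrow> nat \<Rightarrow> nat" where
  "prefix_code X L = (\<Sum>i<L. (if i \<in> X then 2 else 1) * 3 ^ i)"

definition codes_prefix :: "nat set \<Rightarrow> nat \<Rightarrow> nat \<Rightarrow> bool" where
  "codes_prefix X c L \<longleftrightarrow> (\<forall>i<L. trit c i = (if i \<in> X then 2 else 1))"

text \<open>The bound i < c is harmless (trit_eq_0_if_le) and makes the relation decidable by a bounded
  loop (recursive_cond_le).\<close>
definition cond_le :: "nat \<Rightarrow> nat \<Rightarrow> bool" where
  "cond_le c m \<longleftrightarrow> (\<forall>i<c. trit c i \<noteq> 0 \<longrightarrow> trit m i = trit c i)"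

lemma trit_less_3: "trit c i < 3"
  by (simp add: trit_def)

lemma trit_eq_0_if_le: "c \<le> i \<Longrightarrow> trit c i = 0"
proof -
  assume "c \<le> i"
  moreover have "i < (3::nat) ^ i" by (induction i) auto
  ultimately show ?thesis by (simp add: trit_def)
qed

lemma trit_add_pow:
  assumes a: "a < 3 ^ L" and d: "d < 3"
  shows "trit (a + d * 3 ^ L) i = (if i < L then trit a i else if i = L then d else 0)"
proof -
  consider "i < L" | "i = L" | "L < i" by linarith
  then show ?thesis
  proof cases
    case 1
    have "(3::nat) ^ L = 3 ^ ((L - i - 1) + 1 + i)"
      using 1 by (intro arg_cong[where f = "\<lambda>n. (3::nat) ^ n"]) simp
    also have "\<dots> = 3 ^ (L - i - 1) * 3 * 3 ^ i" by (simp add: power_add)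
    finally have e: "d * 3 ^ L = (d * 3 ^ (L - i - 1) * 3) * 3 ^ i" by simp
    have "(a + d * 3 ^ L) div 3 ^ i = a div 3 ^ i + d * 3 ^ (L - i - 1) * 3"
      unfolding e by simp
    then show ?thesis using 1 unfolding trit_def by simp
  next
    case 2
    then show ?thesis using a d unfolding trit_def by simp
  next
    case 3
    have "d * 3 ^ L \<le> 2 * 3 ^ L" using d by simp
    then have "a + d * 3 ^ L < 3 ^ L + 2 * 3 ^ L" using a by linarith
    also have "\<dots> = 3 ^ Suc L" by simp
    also have "\<dots> \<le> 3 ^ i" using 3 by (intro power_increasing) auto
    finally show ?thesis using 3 unfolding trit_def by simp
  qed
qed

lemma prefix_code_Suc: "prefix_code X (Suc L) = prefix_code X L + (if L \<in> X then 2 else 1) * 3 ^ L"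
  by (simp add: prefix_code_def)

lemma prefix_code_less: "prefix_code X L < 3 ^ L"
  by (induction L) (auto simp: prefix_code_Suc prefix_code_def)

lemma le_prefix_code: "L \<le> prefix_code X L"
proof (induction L)
  case (Suc L)
  have "(1::nat) \<le> (if L \<in> X then 2 else 1) * 3 ^ L" by simp
  with Suc show ?case unfolding prefix_code_Suc by linarith
qed (simp add: prefix_code_def)

lemma trit_prefix_code: "trit (prefix_code X L) i = (if i < L then (if i \<in> X then 2 else 1) else 0)"
proof (induction L)
  case 0
  then show ?case by (simp add: prefix_code_def trit_def)
next
  case (Suc L)
  have "trit (prefix_code X (Suc L)) i = (if i < L then trit (prefix_code X L) i
      else if i = L then (if L \<in> X then 2 else 1) else 0)"
    using trit_add_pow[OF prefix_code_less[of X L], of "if L \<in> X then 2 else 1" i]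
    by (simp add: prefix_code_Suc)
  with Suc.IH show ?case by (cases "i < L"; cases "i = L") auto
qed

lemma codes_prefix_mono: "codes_prefix X c L \<Longrightarrow> L' \<le> L \<Longrightarrow> codes_prefix X c L'"
  unfolding codes_prefix_def by auto

lemma codes_prefix_prefix_code: "L \<le> L' \<Longrightarrow> codes_prefix X (prefix_code X L') L"
  unfolding codes_prefix_def trit_prefix_code by auto

lemma cond_le_iff: "cond_le c m \<longleftrightarrow> (\<forall>i. trit c i \<noteq> 0 \<longrightarrow> trit m i = trit c i)"
  unfolding cond_le_def using trit_eq_0_if_le by (metis not_le)

lemma cond_le_refl: "cond_le c c"
  by (simp add: cond_le_def)

lemma cond_le_trans: "cond_le a b \<Longrightarrow> cond_le b c \<Longrightarrow> cond_le a c"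
  unfolding cond_le_iff by metis

lemma agrees_cond_le: "cond_le c d \<Longrightarrow> agrees X d \<Longrightarrow> agrees X c"
  unfolding cond_le_iff agrees_def by metis

lemma cond_le_prefix_code:
  assumes "agrees X c" and "c \<le> L"
  shows "cond_le c (prefix_code X L)"
  unfolding cond_le_def
proof (intro allI impI)
  fix i assume i: "i < c" "trit c i \<noteq> 0"
  then have "i \<in> X \<longleftrightarrow> trit c i = 2" using assms(1) unfolding agrees_def by blast
  then show "trit (prefix_code X L) i = trit c i"
    using i assms(2) trit_less_3[of c i] by (auto simp: trit_prefix_code)
qed

lemma recursive_trit: "recursive k a \<Longrightarrow> recursive k b \<Longrightarrow> recursive k (\<lambda>xs. trit (a xs) (b xs))"
proof -
  have "recursive (Suc 1) (\<lambda>xs. prim_rec (\<lambda>ys. ys ! 0) (\<lambda>ys. ys ! 1 div 3) (hd xs) (tl xs))"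
    by (rule recursive_prim_rec) (auto intro!: recursive_proj recursive_div3)
  then have "recursive (Suc 1) (\<lambda>xs. xs ! 1 div 3 ^ (xs ! 0))"
  proof (rule recursive_cong)
    fix xs :: "nat list" assume "length xs = Suc 1"
    then obtain i c where xs: "xs = [i, c]" by (auto simp: length_Suc_conv)
    have "prim_rec (\<lambda>ys. ys ! 0) (\<lambda>ys. ys ! 1 div 3) i [c] = c div 3 ^ i"
    proof (induction i)
      case (Suc i)
      have "c div 3 ^ Suc i = c div 3 ^ i div 3" by (simp only: power_Suc2 div_mult2_eq)
      with Suc show ?case by simp
    qed simp
    then show "prim_rec (\<lambda>ys. ys ! 0) (\<lambda>ys. ys ! 1 div 3) (hd xs) (tl xs) = xs ! 1 div 3 ^ (xs ! 0)"
      using xs by simp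
  qed
  then have "recursive 2 (\<lambda>xs. xs ! 1 div 3 ^ (xs ! 0))" by (simp add: numeral_2_eq_2)
  then have "recursive 2 (\<lambda>xs. trit (xs ! 1) (xs ! 0))"
    unfolding trit_def by (rule recursive_mod3)
  then show "recursive k a \<Longrightarrow> recursive k b \<Longrightarrow> recursive k (\<lambda>xs. trit (a xs) (b xs))"
    using recursive_comp2[of "\<lambda>xs. trit (xs ! 1) (xs ! 0)" k b a] by simp
qed

fun mismatch_below :: "nat \<Rightarrow> nat \<Rightarrow> nat \<Rightarrow> nat" where
  "mismatch_below c m 0 = 0"
| "mismatch_below c m (Suc i) = (if mismatch_below c m i = 0 then
     (if trit c i = 0 then 0 else if trit m i = trit c i then 0 else 1) else 1)"

lemma mismatch_below_eq_0_iff: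
  "mismatch_below c m b = 0 \<longleftrightarrow> (\<forall>i<b. trit c i \<noteq> 0 \<longrightarrow> trit m i = trit c i)"
  by (induction b) (auto simp: less_Suc_eq)

lemma recursive_cond_le:
  assumes "recursive k a" "recursive k b"
  shows "recursive k (\<lambda>xs. if cond_le (a xs) (b xs) then 0 else 1)"
proof -
  define G where "G = (\<lambda>ys. if ys ! 1 = 0 then (if trit (ys ! 2) (ys ! 0) = 0 then 0
    else if trit (ys ! 3) (ys ! 0) = trit (ys ! 2) (ys ! 0) then 0 else 1) else (1::nat))"
  have "recursive (Suc (Suc 2)) G"
    unfolding G_def numeral_eq_Suc
    by (intro recursive_if_zero recursive_if_eq recursive_trit recursive_proj recursive_zero
        recursive_const) simp_all
  then have "recursive (Suc 2) (\<lambda>xs. prim_rec (\<lambda>_. 0) G (hd xs) (tl xs))"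
    by (rule recursive_prim_rec[OF recursive_zero])
  then have "recursive (Suc 2) (\<lambda>xs. mismatch_below (xs ! 1) (xs ! 2) (xs ! 0))"
  proof (rule recursive_cong)
    fix xs :: "nat list" assume "length xs = Suc 2"
    then obtain b c m where xs: "xs = [b, c, m]" by (auto simp: numeral_eq_Suc length_Suc_conv)
    have "prim_rec (\<lambda>_. 0) G b [c, m] = mismatch_below c m b"
      by (induction b) (simp_all add: G_def)
    then show "prim_rec (\<lambda>_. 0) G (hd xs) (tl xs) = mismatch_below (xs ! 1) (xs ! 2) (xs ! 0)"
      using xs by simp
  qed
  then have "recursive 3 (\<lambda>xs. mismatch_below (xs ! 1) (xs ! 2) (xs ! 0))"
    by (simp add: numeral_3_eq_3 numeral_2_eq_2)
  from recursive_comp3[OF this assms(1,1,2)]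
  have "recursive k (\<lambda>xs. mismatch_below (a xs) (b xs) (a xs))" by (rule recursive_cong) simp
  then have "recursive k (\<lambda>xs. if mismatch_below (a xs) (b xs) (a xs) = 0 then 0 else 1)"
    by (rule recursive_if_zero[OF _ recursive_zero recursive_const])
  then show ?thesis by (rule recursive_cong) (simp add: mismatch_below_eq_0_iff cond_le_def)
qed

section \<open>Bounded evaluation\<close>

text \<open>Partial results are coded in nat: 0 for no result and Suc y for the result y.\<close>

fun iter_partial :: "(nat \<Rightarrow> nat \<Rightarrow> nat) \<Rightarrow> nat \<Rightarrow> nat \<Rightarrow> nat" where
  "iter_partial G a 0 = a"
| "iter_partial G a (Suc j) = (case iter_partial G a j of 0 \<Rightarrow> 0 | Suc y \<Rightarrow> G j y)"

text \<open>search_bounded F b looks for the least m < b with F m = 1 (result 0): it returns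
  Suc (Suc m) if it finds m, 1 if it first meets an F j = 0 (no result), and 0 if every
  F j with j < b is a nonzero result.\<close>

fun search_bounded :: "(nat \<Rightarrow> nat) \<Rightarrow> nat \<Rightarrow> nat" where
  "search_bounded F 0 = 0"
| "search_bounded F (Suc b) = (if search_bounded F b = 0 then
     (if F b = 0 then 1 else if F b = 1 then Suc (Suc b) else 0) else search_bounded F b)"

text \<open>bounded_eval p s c xs runs p on xs, answering oracle queries from the finite condition c
  and cutting every unbounded search off at s. The digit of c at a query is already the coded
  answer: 0 (undetermined, no result), 1 (result 0) or 2 (result 1).\<close>

primrec bounded_eval :: "rf \<Rightarrow> nat \<Rightarrow> nat \<Rightarrow> nat list \<Rightarrow> nat" where
  "bounded_eval Zero s c xs = Suc 0"
| "bounded_eval Succ s c xs = Suc (Suc (hd0 xs))"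
| "bounded_eval (Proj i) s c xs = Suc (if i < length xs then xs ! i else 0)"
| "bounded_eval Oracle s c xs = trit c (hd0 xs)"
| "bounded_eval (Comp f gs) s c xs = (if 0 \<in> set (map (\<lambda>g. bounded_eval g s c xs) gs) then 0
     else bounded_eval f s c (map (\<lambda>g. bounded_eval g s c xs - 1) gs))"
| "bounded_eval (Prec f g) s c xs = (case xs of [] \<Rightarrow> 0
     | n # ys \<Rightarrow> iter_partial (\<lambda>j y. bounded_eval g s c (j # y # ys)) (bounded_eval f s c ys) n)"
| "bounded_eval (Mu f) s c xs = search_bounded (\<lambda>m. bounded_eval f s c (m # xs)) s - 1"

lemma search_bounded_eq_0_iff: "search_bounded F b = 0 \<longleftrightarrow> (\<forall>j<b. 2 \<le> F j)"
  by (induction b) (auto simp: less_Suc_eq)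

lemma search_bounded_eq_Suc_SucD:
  "search_bounded F b = Suc (Suc m) \<Longrightarrow> m < b \<and> F m = 1 \<and> (\<forall>j<m. 2 \<le> F j)"
  by (induction b) (auto simp: search_bounded_eq_0_iff split: if_splits)

lemma search_bounded_eq_Suc_Suc:
  assumes "\<forall>j<m. 2 \<le> F j" "F m = 1" "m < b"
  shows "search_bounded F b = Suc (Suc m)"
  using assms(3)
proof (induction b)
  case (Suc b)
  show ?case
  proof (cases "m < b")
    case True
    with Suc show ?thesis by simp
  next
    case False
    with Suc.prems have "m = b" by simp
    with assms(1,2) show ?thesis by (simp add: search_bounded_eq_0_iff)
  qed
qed simp

lemma eval_Prec_if_iter_partial:
  assumes "iter_partial (\<lambda>j y. bounded_eval g s c (j # y # ys)) (bounded_eval f s c ys) n = Suc y"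
    and f: "\<And>xs y. bounded_eval f s c xs = Suc y \<Longrightarrow> eval X f xs y"
    and g: "\<And>xs y. bounded_eval g s c xs = Suc y \<Longrightarrow> eval X g xs y"
  shows "eval X (Prec f g) (n # ys) y"
  using assms(1)
proof (induction n arbitrary: y)
  case 0
  then show ?case using f by (auto intro: eval.ev_prec0)
next
  case (Suc n)
  then obtain y1 where y1: "iter_partial (\<lambda>j y. bounded_eval g s c (j # y # ys)) (bounded_eval f s c ys) n = Suc y1"
    by (auto split: nat.splits)
  with Suc.prems have "bounded_eval g s c (n # y1 # ys) = Suc y" by simp
  with Suc.IH[OF y1] g show ?case by (auto intro: eval.ev_precS)
qed

lemma bounded_eval_sound: "bounded_eval p s c xs = Suc y \<Longrightarrow> agrees X c \<Longrightarrow> eval X p xs y"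
proof (induction p arbitrary: xs y)
  case Zero
  then show ?case using eval.ev_zero by simp
next
  case Succ
  then have "y = Suc (hd0 xs)" by simp
  then show ?case using eval.ev_succ by simp
next
  case (Proj i)
  then have "y = (if i < length xs then xs ! i else 0)" by simp
  then show ?case using eval.ev_proj by simp
next
  case Oracle
  then have "y = (if hd0 xs \<in> X then 1 else 0)"
    using trit_less_3[of c "hd0 xs"] unfolding agrees_def by auto
  then show ?case using eval.ev_oracle by simp
next
  case (Comp f gs)
  from Comp.prems have nz: "\<forall>g\<in>set gs. bounded_eval g s c xs \<noteq> 0" by (auto split: if_splits)
  have "list_all2 (\<lambda>g y. eval X g xs y) gs (map (\<lambda>g. bounded_eval g s c xs - 1) gs)"
    unfolding list.rel_map
  proof (rule list.rel_refl_strong)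
    fix g assume g: "g \<in> set gs"
    then have "bounded_eval g s c xs = Suc (bounded_eval g s c xs - 1)" using nz by auto
    then show "eval X g xs (bounded_eval g s c xs - 1)" using Comp.IH(2)[OF g] Comp.prems(2) by blast
  qed
  moreover have "0 \<notin> set (map (\<lambda>g. bounded_eval g s c xs) gs)" using nz by auto
  with Comp.prems(1) have "bounded_eval f s c (map (\<lambda>g. bounded_eval g s c xs - 1) gs) = Suc y" by simp
  with Comp.IH(1) Comp.prems(2) have "eval X f (map (\<lambda>g. bounded_eval g s c xs - 1) gs) y" by blast
  ultimately show ?case by (rule eval.ev_comp)
next
  case (Prec f g)
  then obtain n ys where xs: "xs = n # ys" by (cases xs) auto
  with Prec.prems(1) have "iter_partial (\<lambda>j y. bounded_eval g s c (j # y # ys)) (bounded_eval f s c ys) n = Suc y"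
    by simp
  then show ?case unfolding xs
    by (rule eval_Prec_if_iter_partial) (use Prec.IH Prec.prems(2) in blast)+
next
  case (Mu f)
  let ?F = "\<lambda>m. bounded_eval f s c (m # xs)"
  from Mu.prems have "search_bounded ?F s = Suc (Suc y)" by simp
  then have F: "?F y = 1" "\<forall>j<y. 2 \<le> ?F j" using search_bounded_eq_Suc_SucD by blast+
  have "\<forall>m<y. \<exists>z. eval X f (m # xs) (Suc z)"
  proof (intro allI impI)
    fix m assume "m < y"
    then have "?F m = Suc (Suc (?F m - 2))" using F(2) by auto
    then show "\<exists>z. eval X f (m # xs) (Suc z)" using Mu.IH Mu.prems(2) by blast
  qed
  moreover have "eval X f (y # xs) 0" using F(1) Mu.IH Mu.prems(2) by simp
  ultimately show ?case by (intro eval.ev_mu)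
qed

definition bounded_eval_stable :: "nat set \<Rightarrow> rf \<Rightarrow> nat list \<Rightarrow> nat \<Rightarrow> nat \<Rightarrow> nat \<Rightarrow> bool" where
  "bounded_eval_stable X p xs y s0 L \<longleftrightarrow>
     (\<forall>s c. s0 \<le> s \<longrightarrow> codes_prefix X c L \<longrightarrow> bounded_eval p s c xs = Suc y)"

lemma bounded_eval_stable_mono:
  "bounded_eval_stable X p xs y s0 L \<Longrightarrow> s0 \<le> s0' \<Longrightarrow> L \<le> L' \<Longrightarrow> bounded_eval_stable X p xs y s0' L'"
  unfolding bounded_eval_stable_def using codes_prefix_mono by (meson order_trans)

lemma ex_common_bounds:
  fixes P :: "nat \<Rightarrow> nat \<Rightarrow> nat \<Rightarrow> bool"
  assumes "\<forall>m<n. \<exists>a b. P m a b" and "\<And>m a b a' b'. P m a b \<Longrightarrow> a \<le> a' \<Longrightarrow> b \<le> b' \<Longrightarrow> P m a' b'"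
  shows "\<exists>a b. \<forall>m<n. P m a b"
  using assms(1)
proof (induction n)
  case (Suc n)
  then obtain a b where ab: "\<forall>m<n. P m a b" by auto
  obtain a1 b1 where "P n a1 b1" using Suc.prems by auto
  then have "\<forall>m<Suc n. P m (max a a1) (max b b1)"
    using ab assms(2) by (metis less_Suc_eq max.cobounded1 max.cobounded2)
  then show ?case by blast
qed simp

lemma bounded_eval_stable_Comp:
  assumes gs: "list_all2 (\<lambda>g y. \<exists>s0 L. bounded_eval_stable X g xs y s0 L) gs ys"
    and f: "bounded_eval_stable X f ys z a1 b1"
  shows "\<exists>s0 L. bounded_eval_stable X (Comp f gs) xs z s0 L"
proof -
  have len: "length gs = length ys" using gs by (rule list_all2_lengthD)
  have "\<exists>a b. \<forall>i<length gs. bounded_eval_stable X (gs ! i) xs (ys ! i) a b"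
  proof (rule ex_common_bounds)
    show "\<forall>i<length gs. \<exists>a b. bounded_eval_stable X (gs ! i) xs (ys ! i) a b"
      using gs by (simp add: list_all2_conv_all_nth)
  qed (rule bounded_eval_stable_mono)
  then obtain a b where ab: "\<forall>i<length gs. bounded_eval_stable X (gs ! i) xs (ys ! i) a b" by blast
  have "bounded_eval (Comp f gs) s c xs = Suc z" if s: "max a a1 \<le> s" and c: "codes_prefix X c (max b b1)" for s c
  proof -
    have cb: "codes_prefix X c b" "codes_prefix X c b1" using codes_prefix_mono[OF c] by simp_all
    have "bounded_eval (gs ! i) s c xs = Suc (ys ! i)" if "i < length gs" for i
      using ab that s cb(1) unfolding bounded_eval_stable_def by simp
    then have m: "map (\<lambda>g. bounded_eval g s c xs) gs = map Suc ys"
      using len by (simp add: list_eq_iff_nth_eq)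
    then have "0 \<notin> set (map (\<lambda>g. bounded_eval g s c xs) gs)" by auto
    moreover have "map (\<lambda>g. bounded_eval g s c xs - 1) gs = ys"
      using arg_cong[OF m, of "map (\<lambda>x. x - 1)"] by (simp add: comp_def)
    ultimately show ?thesis using f s cb(2) unfolding bounded_eval_stable_def by simp
  qed
  then show ?thesis unfolding bounded_eval_stable_def by blast
qed

lemma bounded_eval_stable_Mu:
  assumes zero: "bounded_eval_stable X f (n # xs) 0 a b"
    and below: "\<forall>m<n. \<exists>y a b. bounded_eval_stable X f (m # xs) (Suc y) a b"
  shows "\<exists>s0 L. bounded_eval_stable X (Mu f) xs n s0 L"
proof -
  have "\<exists>a1 b1. \<forall>m<n. \<exists>y. bounded_eval_stable X f (m # xs) (Suc y) a1 b1"
  proof (rule ex_common_bounds)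
    show "\<forall>m<n. \<exists>a b y. bounded_eval_stable X f (m # xs) (Suc y) a b" using below by blast
  qed (use bounded_eval_stable_mono in blast)
  then obtain a1 b1 where nz: "\<forall>m<n. \<exists>y. bounded_eval_stable X f (m # xs) (Suc y) a1 b1" by blast
  have "bounded_eval (Mu f) s c xs = Suc n"
    if s: "max (Suc n) (max a a1) \<le> s" and c: "codes_prefix X c (max b b1)" for s c
  proof -
    let ?F = "\<lambda>m. bounded_eval f s c (m # xs)"
    have cb: "codes_prefix X c b" "codes_prefix X c b1" using codes_prefix_mono[OF c] by simp_all
    have "?F n = 1" using zero s cb(1) unfolding bounded_eval_stable_def by simp
    moreover have "2 \<le> ?F j" if j: "j < n" for j
    proof -
      obtain y where "bounded_eval_stable X f (j # xs) (Suc y) a1 b1" using nz j by blast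
      then have "?F j = Suc (Suc y)" using s cb(2) unfolding bounded_eval_stable_def by simp
      then show ?thesis by simp
    qed
    ultimately have "search_bounded ?F s = Suc (Suc n)" using search_bounded_eq_Suc_Suc s by auto
    then show ?thesis by simp
  qed
  then show ?thesis unfolding bounded_eval_stable_def by blast
qed

lemma bounded_eval_complete: "eval X p xs y \<Longrightarrow> \<exists>s0 L. bounded_eval_stable X p xs y s0 L"
proof (induction rule: eval.induct)
  case (ev_oracle xs)
  have "bounded_eval_stable X Oracle xs (if hd0 xs \<in> X then 1 else 0) 0 (Suc (hd0 xs))"
    unfolding bounded_eval_stable_def codes_prefix_def by auto
  then show ?case by blast
next
  case (ev_comp xs gs ys f z)
  then obtain a1 b1 where "bounded_eval_stable X f ys z a1 b1" by blast
  moreover have "list_all2 (\<lambda>g y. \<exists>s0 L. bounded_eval_stable X g xs y s0 L) gs ys"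
    using ev_comp.IH(1) by (rule list_all2_mono) blast
  ultimately show ?case by (intro bounded_eval_stable_Comp)
next
  case (ev_prec0 f xs y g)
  then obtain a b where "bounded_eval_stable X f xs y a b" by blast
  then have "bounded_eval_stable X (Prec f g) (0 # xs) y a b" unfolding bounded_eval_stable_def by simp
  then show ?case by blast
next
  case (ev_precS f g n xs y z)
  then obtain a b a1 b1 where "bounded_eval_stable X (Prec f g) (n # xs) y a b"
    and "bounded_eval_stable X g (n # y # xs) z a1 b1" by blast
  then have "bounded_eval_stable X (Prec f g) (Suc n # xs) z (max a a1) (max b b1)"
    unfolding bounded_eval_stable_def using codes_prefix_mono by auto
  then show ?case by blast
next
  case (ev_mu f n xs)
  then obtain a b where zero: "bounded_eval_stable X f (n # xs) 0 a b" by blast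
  show ?case by (rule bounded_eval_stable_Mu[OF zero]) (use ev_mu.IH(2) in blast)
qed (auto simp: bounded_eval_stable_def)

abbreviation bounded_eval_list :: "rf \<Rightarrow> nat list \<Rightarrow> nat" where
  "bounded_eval_list p xs \<equiv> bounded_eval p (xs ! 0) (xs ! 1) (drop 2 xs)"

lemma map_nth_upt_drop: "length xs = n \<Longrightarrow> map (\<lambda>a. xs ! a) [l..<n] = drop l xs"
  by (auto intro: nth_equalityI)

lemma recursive_comp_drop:
  assumes f: "recursive m f" and m: "length ds + (n - l) = m" and ds: "\<forall>d\<in>set ds. recursive n d"
  shows "recursive n (\<lambda>xs. f (map (\<lambda>d. d xs) ds @ drop l xs))"
proof -
  have "recursive n (\<lambda>xs. f (map (\<lambda>g. g xs) (ds @ map (\<lambda>a xs. xs ! a) [l..<n])))"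
    using f m ds by (intro recursive_comp) (auto intro: recursive_proj)
  then show ?thesis by (rule recursive_cong) (simp add: comp_def map_nth_upt_drop)
qed

lemma recursive_bounded_eval_args:
  assumes p: "\<And>k. recursive (Suc (Suc k)) (bounded_eval_list p)"
    and "i < n" "j < n" "\<forall>d\<in>set ds. recursive n d"
  shows "recursive n (\<lambda>xs. bounded_eval p (xs ! i) (xs ! j) (map (\<lambda>d. d xs) ds @ drop l xs))"
proof -
  have "recursive n (\<lambda>xs. bounded_eval_list p (map (\<lambda>d. d xs) ([\<lambda>xs. xs ! i, \<lambda>xs. xs ! j] @ ds) @ drop l xs))"
    using assms by (intro recursive_comp_drop[OF p[of "length ds + (n - l)"]]) (auto intro: recursive_proj)
  then show ?thesis by (rule recursive_cong) simp
qed

lemma recursive_bounded_eval_Comp: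
  assumes f: "\<And>k. recursive (Suc (Suc k)) (bounded_eval_list f)"
    and gs: "\<And>g. g \<in> set gs \<Longrightarrow> recursive (Suc (Suc k)) (bounded_eval_list g)"
  shows "recursive (Suc (Suc k)) (bounded_eval_list (Comp f gs))"
proof -
  let ?args = "map (\<lambda>g xs. bounded_eval_list g xs - 1) gs"
  have "recursive (Suc (Suc k))
      (\<lambda>xs. bounded_eval f (xs ! 0) (xs ! 1) (map (\<lambda>d. d xs) ?args @ drop (Suc (Suc k)) xs))"
    using gs by (intro recursive_bounded_eval_args[OF f]) (auto simp del: One_nat_def intro: recursive_pred)
  then have "recursive (Suc (Suc k)) (\<lambda>xs. if 0 \<in> set (map (\<lambda>g. g xs) (map bounded_eval_list gs)) then 0
      else bounded_eval f (xs ! 0) (xs ! 1) (map (\<lambda>d. d xs) ?args @ drop (Suc (Suc k)) xs))"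
    using gs by (intro recursive_if_zero_mem) auto
  then show ?thesis by (rule recursive_cong) (simp add: comp_def)
qed

lemma prim_rec_bounded_eval_Prec:
  "prim_rec (bounded_eval_list f)
     (\<lambda>qs. if qs ! 1 = 0 then 0 else bounded_eval g (qs ! 2) (qs ! 3) (qs ! 0 # (qs ! 1 - 1) # drop 4 qs))
     n (s # c # ys) = bounded_eval (Prec f g) s c (n # ys)"
proof (induction n)
  case (Suc n)
  then show ?case by (cases "bounded_eval (Prec f g) s c (n # ys)") (auto simp: numeral_eq_Suc)
qed simp

lemma recursive_bounded_eval_Prec:
  assumes f: "\<And>k. recursive (Suc (Suc k)) (bounded_eval_list f)"
    and g: "\<And>k. recursive (Suc (Suc k)) (bounded_eval_list g)"
  shows "recursive (Suc (Suc k)) (bounded_eval_list (Prec f g))"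
proof (cases k)
  case 0
  then show ?thesis by (intro recursive_cong[OF recursive_zero]) simp
next
  case (Suc k')
  define G where "G = (\<lambda>qs. if qs ! 1 = 0 then 0
    else bounded_eval g (qs ! 2) (qs ! 3) (qs ! 0 # (qs ! 1 - 1) # drop 4 qs))"
  have "recursive (Suc (Suc (Suc (Suc k'))))
      (\<lambda>qs. bounded_eval g (qs ! 2) (qs ! 3) (map (\<lambda>d. d qs) [\<lambda>q. q ! 0, \<lambda>q. q ! 1 - 1] @ drop 4 qs))"
    using recursive_pred[OF recursive_proj[of 1 "Suc (Suc (Suc (Suc k')))"]]
    by (intro recursive_bounded_eval_args[OF g]) (auto intro: recursive_proj)
  then have step: "recursive (Suc (Suc (Suc (Suc k'))))
      (\<lambda>qs. bounded_eval g (qs ! 2) (qs ! 3) (qs ! 0 # (qs ! 1 - 1) # drop 4 qs))"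
    by simp
  have "recursive (Suc (Suc (Suc (Suc k')))) G"
    unfolding G_def by (rule recursive_if_zero[OF recursive_proj recursive_zero step]) simp
  then have "recursive (Suc (Suc (Suc k'))) (\<lambda>zs. prim_rec (bounded_eval_list f) G (hd zs) (tl zs))"
    by (rule recursive_prim_rec[OF f])
  then have "recursive (Suc (Suc (Suc k'))) (\<lambda>xs. (\<lambda>zs. prim_rec (bounded_eval_list f) G (hd zs) (tl zs))
      (map (\<lambda>d. d xs) [\<lambda>xs. xs ! 2, \<lambda>xs. xs ! 0, \<lambda>xs. xs ! 1] @ drop 3 xs))"
    by (rule recursive_comp_drop) (auto intro: recursive_proj)
  then have "recursive (Suc (Suc (Suc k')))
      (\<lambda>xs. prim_rec (bounded_eval_list f) G (xs ! 2) (xs ! 0 # xs ! 1 # drop 3 xs))"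
    by simp
  then have "recursive (Suc (Suc (Suc k'))) (bounded_eval_list (Prec f g))"
  proof (rule recursive_cong)
    fix xs :: "nat list" assume "length xs = Suc (Suc (Suc k'))"
    then obtain s c n ys where "xs = s # c # n # ys" by (auto simp: length_Suc_conv)
    then show "prim_rec (bounded_eval_list f) G (xs ! 2) (xs ! 0 # xs ! 1 # drop 3 xs) =
        bounded_eval_list (Prec f g) xs"
      using prim_rec_bounded_eval_Prec[of f g n s c ys] unfolding G_def
      by (simp add: numeral_2_eq_2 numeral_3_eq_3)
  qed
  with Suc show ?thesis by simp
qed

lemma prim_rec_bounded_eval_Mu:
  "prim_rec (\<lambda>_. 0)
     (\<lambda>qs. if qs ! 1 = 0 then (if bounded_eval f (qs ! 2) (qs ! 3) (qs ! 0 # drop 4 qs) = 0 then 1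
        else if bounded_eval f (qs ! 2) (qs ! 3) (qs ! 0 # drop 4 qs) = 1 then Suc (Suc (qs ! 0))
        else 0) else qs ! 1)
     b (s # c # xs) = search_bounded (\<lambda>m. bounded_eval f s c (m # xs)) b"
  by (induction b) (auto simp: numeral_eq_Suc)

lemma recursive_bounded_eval_Mu:
  assumes f: "\<And>k. recursive (Suc (Suc k)) (bounded_eval_list f)"
  shows "recursive (Suc (Suc k)) (bounded_eval_list (Mu f))"
proof -
  define V where "V = (\<lambda>qs. bounded_eval f (qs ! 2) (qs ! 3) (qs ! 0 # drop 4 qs))"
  define G where "G = (\<lambda>qs. if qs ! 1 = 0 then (if V qs = 0 then 1
    else if V qs = 1 then Suc (Suc (qs ! 0)) else 0) else qs ! 1)"
  have "recursive (Suc (Suc (Suc (Suc k)))) (\<lambda>qs. bounded_eval f (qs ! 2) (qs ! 3) (map (\<lambda>d. d qs) [\<lambda>q. q ! 0] @ drop 4 qs))"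
    by (intro recursive_bounded_eval_args[OF f]) (auto intro: recursive_proj)
  then have V: "recursive (Suc (Suc (Suc (Suc k)))) V"
    unfolding V_def by simp
  have "recursive (Suc (Suc (Suc (Suc k)))) G"
    unfolding G_def
    by (rule recursive_if_zero[OF recursive_proj recursive_if_zero[OF V recursive_const
          recursive_if_eq[OF V recursive_const recursive_Suc[OF recursive_Suc[OF recursive_proj]]
          recursive_const]] recursive_proj]) simp_all
  then have "recursive (Suc (Suc (Suc k))) (\<lambda>zs. prim_rec (\<lambda>_. 0) G (hd zs) (tl zs))"
    by (rule recursive_prim_rec[OF recursive_zero])
  then have "recursive (Suc (Suc k)) (\<lambda>xs. (\<lambda>zs. prim_rec (\<lambda>_. 0) G (hd zs) (tl zs))
      (map (\<lambda>d. d xs) [\<lambda>xs. xs ! 0] @ drop 0 xs) - 1)"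
    by (intro recursive_pred recursive_comp_drop) (auto intro: recursive_proj)
  then have "recursive (Suc (Suc k)) (\<lambda>xs. prim_rec (\<lambda>_. 0) G (xs ! 0) xs - 1)"
    by simp
  then show ?thesis
  proof (rule recursive_cong)
    fix xs :: "nat list" assume "length xs = Suc (Suc k)"
    then obtain s c ys where "xs = s # c # ys" by (auto simp: length_Suc_conv)
    then show "prim_rec (\<lambda>_. 0) G (xs ! 0) xs - 1 = bounded_eval_list (Mu f) xs"
      using prim_rec_bounded_eval_Mu[of f s s c ys] unfolding G_def V_def by simp
  qed
qed

lemma recursive_bounded_eval: "recursive (Suc (Suc k)) (bounded_eval_list p)"
proof (induction p arbitrary: k)
  case Zero
  show ?case by (rule recursive_cong[OF recursive_const[of _ 1]]) simp
next
  case Succ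
  show ?case by (rule recursive_cong[OF recursive_Suc[OF recursive_Suc[OF recursive_hd0_drop2]]]) simp
next
  case (Proj i)
  have "recursive (Suc (Suc k)) (\<lambda>xs. Suc (if i < k then xs ! Suc (Suc i) else 0))"
    by (cases "i < k") (auto intro!: recursive_Suc recursive_proj recursive_const)
  then show ?case by (rule recursive_cong) simp
next
  case Oracle
  show ?case by (rule recursive_cong[OF recursive_trit[OF recursive_proj recursive_hd0_drop2]]) simp_all
next
  case (Comp f gs)
  then show ?case by (intro recursive_bounded_eval_Comp)
next
  case (Prec f g)
  then show ?case by (intro recursive_bounded_eval_Prec)
next
  case (Mu f)
  then show ?case by (intro recursive_bounded_eval_Mu)
qed

section \<open>Searching for a computable embedding\<close>

definition halts_densely_above :: "rf \<Rightarrow> nat \<Rightarrow> bool" where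
  "halts_densely_above p c0 \<longleftrightarrow>
     (\<forall>n c. cond_le c0 c \<longrightarrow> (\<exists>m. cond_le c m \<and> bounded_eval p m m [n] \<noteq> 0))"

text \<open>A code m serves both as the oracle condition and as the step bound. The test also succeeds
  when c does not extend c0, which makes the search total but never happens along search_cond.\<close>

definition search_test :: "rf \<Rightarrow> nat \<Rightarrow> nat list \<Rightarrow> nat" where
  "search_test p c0 zs = (if cond_le c0 (zs ! 2) then (if cond_le (zs ! 2) (zs ! 0) then
     (if bounded_eval p (zs ! 0) (zs ! 0) [zs ! 1] = 0 then 1 else 0) else 1) else 0)"

definition search_step :: "rf \<Rightarrow> nat \<Rightarrow> nat \<Rightarrow> nat \<Rightarrow> nat" where
  "search_step p c0 n c = (LEAST m. search_test p c0 [m, n, c] = 0)"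

primrec search_cond :: "rf \<Rightarrow> nat \<Rightarrow> nat \<Rightarrow> nat" where
  "search_cond p c0 0 = c0"
| "search_cond p c0 (Suc n) = search_step p c0 n (search_cond p c0 n)"

definition search_output :: "rf \<Rightarrow> nat \<Rightarrow> nat \<Rightarrow> nat" where
  "search_output p c0 n = bounded_eval p (search_cond p c0 (Suc n)) (search_cond p c0 (Suc n)) [n] - 1"

lemma search_test_has_zero:
  assumes "halts_densely_above p c0"
  shows "\<exists>m. search_test p c0 [m, n, c] = 0"
proof (cases "cond_le c0 c")
  case True
  with assms obtain m where "cond_le c m" "bounded_eval p m m [n] \<noteq> 0"
    unfolding halts_densely_above_def by blast
  with True have "search_test p c0 [m, n, c] = 0" by (simp add: search_test_def)
  then show ?thesis ..
next
  case False
  then have "search_test p c0 [0, n, c] = 0" by (simp add: search_test_def)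
  then show ?thesis ..
qed

lemma search_step_spec:
  assumes "halts_densely_above p c0" and "cond_le c0 c"
  shows "cond_le c (search_step p c0 n c) \<and> bounded_eval p (search_step p c0 n c) (search_step p c0 n c) [n] \<noteq> 0"
proof -
  have "search_test p c0 [search_step p c0 n c, n, c] = 0"
    using search_test_has_zero[OF assms(1)] unfolding search_step_def by (rule LeastI_ex)
  with assms(2) show ?thesis by (simp add: search_test_def split: if_splits)
qed

lemma cond_le_search_cond:
  assumes "halts_densely_above p c0"
  shows "cond_le c0 (search_cond p c0 n)"
proof (induction n)
  case (Suc n)
  from cond_le_trans[OF Suc.IH conjunct1[OF search_step_spec[OF assms Suc.IH]]] show ?case by simp
qed (simp add: cond_le_refl)

lemma search_cond_mono:
  assumes "halts_densely_above p c0" and "m \<le> n"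
  shows "cond_le (search_cond p c0 m) (search_cond p c0 n)"
  using assms(2)
proof (induction n rule: dec_induct)
  case (step n)
  from cond_le_trans[OF step.IH conjunct1[OF search_step_spec[OF assms(1) cond_le_search_cond[OF assms(1)]]]]
  show ?case by simp
qed (rule cond_le_refl)

lemma bounded_eval_search_cond:
  "halts_densely_above p c0 \<Longrightarrow>
    bounded_eval p (search_cond p c0 (Suc n)) (search_cond p c0 (Suc n)) [n] \<noteq> 0"
  using search_step_spec cond_le_search_cond by simp

lemma search_output_eval:
  assumes H: "halts_densely_above p c0" and X: "agrees X (search_cond p c0 (Suc N))" and "m \<le> N"
  shows "eval X p [m] (search_output p c0 m)"
proof (rule bounded_eval_sound)
  show "agrees X (search_cond p c0 (Suc m))"
    using agrees_cond_le[OF search_cond_mono[OF H, of "Suc m" "Suc N"] X] \<open>m \<le> N\<close> by simp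
  show "bounded_eval p (search_cond p c0 (Suc m)) (search_cond p c0 (Suc m)) [m] = Suc (search_output p c0 m)"
    using bounded_eval_search_cond[OF H] unfolding search_output_def by simp
qed

lemma recursive_search_test: "recursive 3 (search_test p c0)"
proof -
  have "recursive (Suc (Suc 1)) (bounded_eval_list p)" by (rule recursive_bounded_eval)
  then have "recursive 3 (\<lambda>zs. bounded_eval_list p [zs ! 0, zs ! 0, zs ! 1])"
    by (intro recursive_comp3) (auto simp: numeral_3_eq_3 intro: recursive_proj)
  then have run: "recursive 3 (\<lambda>zs. bounded_eval p (zs ! 0) (zs ! 0) [zs ! 1])"
    by (rule recursive_cong) simp
  have "recursive 3 (\<lambda>zs. if (if cond_le c0 (zs ! 2) then 0 else 1) = (0::nat) then
      (if (if cond_le (zs ! 2) (zs ! 0) then 0 else 1) = (0::nat) then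
      (if bounded_eval p (zs ! 0) (zs ! 0) [zs ! 1] = 0 then 1 else 0) else 1) else 0)"
    by (rule recursive_if_zero[OF recursive_cond_le[OF recursive_const recursive_proj]
          recursive_if_zero[OF recursive_cond_le[OF recursive_proj recursive_proj]
            recursive_if_zero[OF run recursive_const recursive_zero] recursive_const]
          recursive_zero]) simp_all
  then show ?thesis by (rule recursive_cong) (simp add: search_test_def)
qed

lemma recursive_search_cond:
  assumes "halts_densely_above p c0"
  shows "recursive 1 (\<lambda>xs. search_cond p c0 (xs ! 0))"
proof -
  have "recursive 2 (\<lambda>xs. LEAST m. search_test p c0 (m # xs) = 0)"
  proof (rule recursive_Least)
    show "recursive (Suc 2) (search_test p c0)" using recursive_search_test by simp
    show "\<forall>xs. length xs = 2 \<longrightarrow> (\<exists>m. search_test p c0 (m # xs) = 0)"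
      using search_test_has_zero[OF assms] by (auto simp: numeral_2_eq_2 length_Suc_conv)
  qed
  then have "recursive 2 (\<lambda>xs. search_step p c0 (xs ! 0) (xs ! 1))"
    by (rule recursive_cong) (auto simp: search_step_def numeral_2_eq_2 length_Suc_conv)
  then have "recursive (Suc (Suc 0)) (\<lambda>xs. search_step p c0 (xs ! 0) (xs ! 1))"
    by (simp add: numeral_2_eq_2)
  then have "recursive (Suc 0) (\<lambda>xs. prim_rec (\<lambda>_. c0) (\<lambda>ys. search_step p c0 (ys ! 0) (ys ! 1)) (hd xs) (tl xs))"
    by (rule recursive_prim_rec[OF recursive_const])
  then have "recursive (Suc 0) (\<lambda>xs. search_cond p c0 (xs ! 0))"
  proof (rule recursive_cong)
    fix xs :: "nat list" assume "length xs = Suc 0"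
    then obtain n where xs: "xs = [n]" by (auto simp: length_Suc_conv)
    have "prim_rec (\<lambda>_. c0) (\<lambda>ys. search_step p c0 (ys ! 0) (ys ! 1)) n [] = search_cond p c0 n"
      by (induction n) auto
    with xs show "prim_rec (\<lambda>_. c0) (\<lambda>ys. search_step p c0 (ys ! 0) (ys ! 1)) (hd xs) (tl xs) =
        search_cond p c0 (xs ! 0)" by simp
  qed
  then show ?thesis by simp
qed

lemma computable_search_output:
  assumes "halts_densely_above p c0"
  shows "computable (search_output p c0)"
proof -
  have c: "recursive 1 (\<lambda>xs. search_cond p c0 (Suc (xs ! 0)))"
    using recursive_comp1[OF recursive_search_cond[OF assms] recursive_Suc[OF recursive_proj[of 0 1]]]
    by simp
  have "recursive (Suc (Suc 1)) (bounded_eval_list p)" by (rule recursive_bounded_eval)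
  then have "recursive 1 (\<lambda>xs. bounded_eval_list p [search_cond p c0 (Suc (xs ! 0)),
      search_cond p c0 (Suc (xs ! 0)), xs ! 0] - 1)"
    by (intro recursive_pred recursive_comp3 c) (auto simp: numeral_3_eq_3 intro: recursive_proj)
  then have "recursive 1 (\<lambda>xs. search_output p c0 (xs ! 0))"
    by (rule recursive_cong) (simp add: search_output_def)
  then obtain q where "\<forall>xs. length xs = 1 \<longrightarrow> eval {} q xs (search_output p c0 (xs ! 0))"
    unfolding recursive_def by blast
  then have "\<forall>n. eval {} q [n] (search_output p c0 n)" by (metis One_nat_def length_Cons list.size(3) nth_Cons_0)
  then show ?thesis unfolding computable_def computable_in_def by blast
qed

definition embedding_oracles :: "lang \<Rightarrow> struc \<Rightarrow> struc \<Rightarrow> rf \<Rightarrow> nat set set" where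
  "embedding_oracles L A B p = {X. \<exists>h. (\<forall>n. eval X p [n] (h n)) \<and> embedding L A B h}"

lemma embedding_if_initial_segments:
  assumes "\<And>N. \<exists>h. embedding L A B h \<and> (\<forall>m\<le>N. f m = h m)"
  shows "embedding L A B f"
proof -
  have agree: "\<exists>h. embedding L A B h \<and> (\<forall>m\<in>F. f m = h m)" if F: "finite F" for F
  proof -
    obtain h where "embedding L A B h" "\<forall>m\<le>Max (insert 0 F). f m = h m" using assms by blast
    moreover have "m \<le> Max (insert 0 F)" if "m \<in> F" for m using F that by simp
    ultimately show ?thesis by blast
  qed
  show ?thesis
    unfolding embedding_def
  proof (intro conjI allI impI)
    show "f ` sdom A \<subseteq> sdom B"
    proof
      fix y assume "y \<in> f ` sdom A"
      then obtain a where "a \<in> sdom A" "y = f a" by blast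
      moreover obtain h where "embedding L A B h" "f a = h a" using agree[of "{a}"] by auto
      then have "h ` sdom A \<subseteq> sdom B" unfolding embedding_def by simp
      ultimately show "y \<in> sdom B" by (simp add: \<open>f a = h a\<close> image_subset_iff)
    qed
    show "inj_on f (sdom A)"
    proof (rule inj_onI)
      fix a b assume "a \<in> sdom A" "b \<in> sdom A" "f a = f b"
      moreover obtain h where "embedding L A B h" "f a = h a" "f b = h b" using agree[of "{a, b}"] by auto
      then have "inj_on h (sdom A)" unfolding embedding_def by simp
      ultimately show "a = b" by (simp add: \<open>f a = h a\<close> \<open>f b = h b\<close> inj_on_eq_iff)
    qed
  next
    fix i k xs assume xs: "rel_ar L i = Some k \<and> length xs = k \<and> set xs \<subseteq> sdom A"
    obtain h where "embedding L A B h" "\<forall>m\<in>set xs. f m = h m" using agree[of "set xs"] by auto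
    moreover from this(2) have fh: "map f xs = map h xs" by simp
    ultimately show "srel A i xs \<longleftrightarrow> srel B i (map f xs)" using xs unfolding fh embedding_def by simp
  next
    fix j k xs assume xs: "fun_ar L j = Some k \<and> length xs = k \<and> set xs \<subseteq> sdom A"
    obtain h where "embedding L A B h" "\<forall>m\<in>insert (sfun A j xs) (set xs). f m = h m"
      using agree[of "insert (sfun A j xs) (set xs)"] by auto
    moreover from this(2) have fh: "map f xs = map h xs" by simp
    ultimately show "f (sfun A j xs) = sfun B j (map f xs)" using xs unfolding fh embedding_def by simp
  qed
qed

lemma agreeing_member_if_dense:
  assumes dense: "\<forall>\<tau>. cyl (\<sigma> @ \<tau>) \<inter> M \<noteq> {}"
    and c: "cond_le (prefix_code {i. i < length \<sigma> \<and> \<sigma> ! i} (length \<sigma>)) c"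
  shows "\<exists>X\<in>M. agrees X c"
proof -
  define \<rho> where "\<rho> = map (\<lambda>i. trit c i = 2) [0..<max c (length \<sigma>)]"
  have "take (length \<sigma>) \<rho> = \<sigma>"
  proof (rule nth_equalityI)
    fix i assume "i < length (take (length \<sigma>) \<rho>)"
    then have i: "i < length \<sigma>" by (simp add: \<rho>_def)
    then have "trit c i = (if \<sigma> ! i then 2 else 1)"
      using c unfolding cond_le_iff by (auto simp: trit_prefix_code)
    with i show "take (length \<sigma>) \<rho> ! i = \<sigma> ! i" by (simp add: \<rho>_def less_max_iff_disj)
  qed (simp add: \<rho>_def)
  then have "\<rho> = \<sigma> @ drop (length \<sigma>) \<rho>" by (metis append_take_drop_id)
  with dense[rule_format, of "drop (length \<sigma>) \<rho>"] have "cyl \<rho> \<inter> M \<noteq> {}" by simp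
  then obtain X where X: "X \<in> cyl \<rho>" "X \<in> M" by blast
  have "agrees X c"
    unfolding agrees_def
  proof (intro allI impI)
    fix i assume "trit c i \<noteq> 0"
    then have "i < c" using trit_eq_0_if_le[of c i] by linarith
    then show "(i \<in> X) = (trit c i = 2)" using X(1) by (simp add: cyl_def \<rho>_def)
  qed
  with X(2) show ?thesis by blast
qed

lemma halts_densely_above_if_agreeing_total:
  assumes "\<And>c. cond_le c0 c \<Longrightarrow> \<exists>X. agrees X c \<and> (\<forall>n. \<exists>y. eval X p [n] y)"
  shows "halts_densely_above p c0"
  unfolding halts_densely_above_def
proof (intro allI impI)
  fix n c assume "cond_le c0 c"
  with assms obtain X y where X: "agrees X c" "eval X p [n] y" by blast
  then obtain s0 L where L: "bounded_eval_stable X p [n] y s0 L" using bounded_eval_complete by blast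
  define m where "m = prefix_code X (max (max L c) s0)"
  have "s0 \<le> m" using le_prefix_code[of "max (max L c) s0" X] unfolding m_def by linarith
  moreover have "codes_prefix X m L" unfolding m_def by (rule codes_prefix_prefix_code) simp
  ultimately have "bounded_eval p m m [n] \<noteq> 0" using L unfolding bounded_eval_stable_def by simp
  moreover have "cond_le c m" unfolding m_def by (rule cond_le_prefix_code[OF X(1)]) simp
  ultimately show "\<exists>m. cond_le c m \<and> bounded_eval p m m [n] \<noteq> 0" by blast
qed

lemma computable_embedding_if_not_nowhere_dense:
  assumes "\<not> nowhere_dense_cantor (embedding_oracles L A B p)"
  shows "\<exists>h. computable h \<and> embedding L A B h"
proof -
  obtain \<sigma> where dense: "\<forall>\<tau>. cyl (\<sigma> @ \<tau>) \<inter> embedding_oracles L A B p \<noteq> {}"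
    using assms unfolding nowhere_dense_cantor_def by blast
  define c0 where "c0 = prefix_code {i. i < length \<sigma> \<and> \<sigma> ! i} (length \<sigma>)"
  have agreeing: "\<exists>X\<in>embedding_oracles L A B p. agrees X c" if "cond_le c0 c" for c
    using agreeing_member_if_dense[OF dense] that unfolding c0_def by blast
  have H: "halts_densely_above p c0"
  proof (rule halts_densely_above_if_agreeing_total)
    fix c assume "cond_le c0 c"
    then obtain X where "X \<in> embedding_oracles L A B p" "agrees X c" using agreeing by blast
    then show "\<exists>X. agrees X c \<and> (\<forall>n. \<exists>y. eval X p [n] y)" unfolding embedding_oracles_def by blast
  qed
  have "embedding L A B (search_output p c0)"
  proof (rule embedding_if_initial_segments)
    fix N
    obtain X h where X: "agrees X (search_cond p c0 (Suc N))"
      and h: "\<forall>n. eval X p [n] (h n)" "embedding L A B h"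
      using agreeing[OF cond_le_search_cond[OF H]] unfolding embedding_oracles_def by blast
    have "search_output p c0 m = h m" if "m \<le> N" for m
      using eval_deterministic[OF search_output_eval[OF H X that] h(1)[rule_format, of m]] .
    with h(2) show "\<exists>h. embedding L A B h \<and> (\<forall>m\<le>N. search_output p c0 m = h m)" by blast
  qed
  then show ?thesis using computable_search_output[OF H] by blast
qed

section \<open>The dichotomy\<close>

lemma turing_degree_cases: "d \<in> turing_degrees \<Longrightarrow> \<exists>Z. d = turing_equiv_rel `` {Z}"
  unfolding turing_degrees_def quotient_def by blast

lemma mem_turing_equiv_class: "Y \<in> turing_equiv_rel `` {Z} \<longleftrightarrow> turing_le Y Z \<and> turing_le Z Y"
  unfolding turing_equiv_rel_def by blast

lemma deg_computable_if_computable: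
  assumes "d \<in> turing_degrees" "computable h"
  shows "deg_computable d h"
proof -
  obtain Z where "d = turing_equiv_rel `` {Z}" using turing_degree_cases[OF assms(1)] by blast
  then have "Z \<in> d" using mem_turing_equiv_class turing_le_refl by blast
  with assms(2) show ?thesis unfolding deg_computable_def using computable_imp_computable_in by blast
qed

lemma computable_in_if_deg_computable:
  assumes "d \<in> turing_degrees" "X \<in> d" "deg_computable d h"
  shows "computable_in X h"
proof -
  obtain Z where Z: "d = turing_equiv_rel `` {Z}" using turing_degree_cases[OF assms(1)] by blast
  obtain Y where Y: "Y \<in> d" "computable_in Y h" using assms(3) unfolding deg_computable_def by blast
  have "turing_le Y X" using turing_le_trans Y(1) assms(2) unfolding Z mem_turing_equiv_class by blast
  with Y(2) show ?thesis by (rule computable_in_turing_le)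
qed

lemma catspec_be_eq_turing_degrees:
  assumes "\<forall>A. computable_struc L A \<and> bi_embeddable L A S \<longrightarrow>
    (\<exists>p. \<not> nowhere_dense_cantor (embedding_oracles L A S p)) \<and>
    (\<exists>q. \<not> nowhere_dense_cantor (embedding_oracles L S A q))"
  shows "catspec_be L S = turing_degrees"
proof
  show "catspec_be L S \<subseteq> turing_degrees" unfolding catspec_be_def by blast
  have "(\<exists>h. computable h \<and> embedding L A S h) \<and> (\<exists>g. computable g \<and> embedding L S A g)"
    if "computable_struc L A" "bi_embeddable L A S" for A
    using assms that computable_embedding_if_not_nowhere_dense by metis
  then show "turing_degrees \<subseteq> catspec_be L S"
    unfolding catspec_be_def using deg_computable_if_computable by blast
qed

lemma embedding_oracles_if_mem_catspec_be:
  assumes "X \<in> \<Union> (catspec_be L S)" "computable_struc L A" "bi_embeddable L A S"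
  shows "(\<exists>p. X \<in> embedding_oracles L A S p) \<and> (\<exists>q. X \<in> embedding_oracles L S A q)"
proof -
  obtain d where d: "d \<in> catspec_be L S" "X \<in> d" using assms(1) by blast
  then have "d \<in> turing_degrees" unfolding catspec_be_def by blast
  moreover obtain h g where "deg_computable d h" "embedding L A S h" "deg_computable d g" "embedding L S A g"
    using d(1) assms(2,3) unfolding catspec_be_def by blast
  ultimately have "computable_in X h" "embedding L A S h" "computable_in X g" "embedding L S A g"
    using computable_in_if_deg_computable d(2) by blast+
  then show ?thesis unfolding embedding_oracles_def computable_in_def by blast
qed

lemma meager_cantor_if_subset_UN:
  fixes N :: "'a::countable \<Rightarrow> nat set set"
  assumes "\<And>p. nowhere_dense_cantor (N p)" and "M \<subseteq> (\<Union>p. N p)"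
  shows "meager_cantor M"
  unfolding meager_cantor_def
proof (intro exI conjI)
  show "\<forall>n. nowhere_dense_cantor (N (from_nat n))" using assms(1) by blast
  have "N p \<subseteq> (\<Union>n. N (from_nat n))" for p
    using UN_upper[of "to_nat p" UNIV "\<lambda>n. N (from_nat n)"] by simp
  with assms(2) show "M \<subseteq> (\<Union>n. N (from_nat n))" by blast
qed

lemma meager_catspec_be:
  assumes A: "computable_struc L A" "bi_embeddable L A S"
    and nowhere_dense: "(\<forall>p. nowhere_dense_cantor (embedding_oracles L A S p)) \<or>
      (\<forall>q. nowhere_dense_cantor (embedding_oracles L S A q))"
  shows "meager_cantor (\<Union> (catspec_be L S))"
proof -
  have "\<Union> (catspec_be L S) \<subseteq> (\<Union>p. embedding_oracles L A S p)"
    and "\<Union> (catspec_be L S) \<subseteq> (\<Union>q. embedding_oracles L S A q)"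
    using embedding_oracles_if_mem_catspec_be[OF _ A] by blast+
  with nowhere_dense show ?thesis
    using meager_cantor_if_subset_UN[of "embedding_oracles L A S"]
      meager_cantor_if_subset_UN[of "embedding_oracles L S A"] by blast
qed

theorem theorem3p2:
  assumes "computable_lang L" and "computable_struc L S"
  shows "catspec_be L S = turing_degrees \<or> meager_cantor (\<Union> (catspec_be L S))"
proof (cases "\<forall>A. computable_struc L A \<and> bi_embeddable L A S \<longrightarrow>
    (\<exists>p. \<not> nowhere_dense_cantor (embedding_oracles L A S p)) \<and>
    (\<exists>q. \<not> nowhere_dense_cantor (embedding_oracles L S A q))")
  case True
  then show ?thesis using catspec_be_eq_turing_degrees by blast
next
  case False
  then obtain A where "computable_struc L A" "bi_embeddable L A S"
    and "(\<forall>p. nowhere_dense_cantor (embedding_oracles L A S p)) \<or>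
      (\<forall>q. nowhere_dense_cantor (embedding_oracles L S A q))" by blast
  then show ?thesis using meager_catspec_be by blast
qed

end
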